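(* For integers $n\ge1$, $0\le l\le n-1$, and $c\in\mathbb{C}\setminus\{0\}$, $$\sum_{\substack{l_1+\cdots+l_n=l\\ l_i\ge0}}\binom{l}{l_1,\ldots,l_n}\prod_{i=1}^n b_{l_i}(c)=B_l^{(l-n+1)}(cn+1).$$
   Context: The Bernoulli polynomials of the second kind are defined by $\frac{t(1+t)^x}{\log(1+t)}=\sum_{l\ge0}b_l(x)\frac{t^l}{l!}$. The Bernoulli polynomials of order $a$ are defined by $\left(\frac{t}{e^t-1}\right)^a e^{xt}=\sum_{n\ge0}B_n^{(a)}(x)\frac{t^n}{n!}$. $\binom{l}{l_1,\ldots,l_n}$ is the multinomial coefficient. *)

theory Defs
  imports "HOL-Computational_Algebra.Formal_Power_Series" "HOL-Library.FuncSet"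
begin

text \<open>Bernoulli polynomials of the second kind:
  t (1+t)^x / log(1+t) = sum_l b_l(x) t^l / l!.
  Here fps_binomial x = (1+t)^x and fps_ln 1 = log(1+t).\<close>
definition bernoulli2 :: "nat \<Rightarrow> complex \<Rightarrow> complex" where
  "bernoulli2 l x = fact l * fps_nth (fps_X * fps_binomial x / fps_ln 1) l"

definition bernoulli_ord_gf :: "int \<Rightarrow> complex fps" where
  "bernoulli_ord_gf a =
     (if a \<ge> 0 then (fps_X / (fps_exp 1 - 1)) ^ nat a
      else ((fps_exp 1 - 1) / fps_X) ^ nat (- a))"

definition bernoulli_ord :: "int \<Rightarrow> nat \<Rightarrow> complex \<Rightarrow> complex" where
  "bernoulli_ord a n x = fact n * fps_nth (bernoulli_ord_gf a * fps_exp x) n"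

definition multinomial :: "nat \<Rightarrow> (nat \<Rightarrow> nat) \<Rightarrow> nat set \<Rightarrow> nat" where
  "multinomial l ls I = fact l div (\<Prod>i\<in>I. fact (ls i))"

end

theory Submission
  imports Defs "HOL-Computational_Algebra.Formal_Laurent_Series"
begin

text \<open>
  Since the b_j(c)/j! are the coefficients of F = t(1+t)^c/log(1+t), the left-hand side is
  l! times the t^l-coefficient of F^n.  That coefficient is the residue of t^(-l-1) F^n, and residues
  are invariant under the substitution t = e^u - 1.  As F(e^u - 1) = e^(cu)(e^u - 1)/u, the
  substituted integrand t^(-l-1) F^n dt becomes u^(-l-1) ((e^u - 1)/u)^(n-l-1) e^((cn+1)u) du,
  whose residue is the u^l-coefficient defining B_l^(l-n+1)(cn+1).
\<close>

lemma fact_prod_dvd_fact_sum: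
  assumes "finite I"
  shows "(\<Prod>i\<in>I. fact (ls i)) dvd (fact (\<Sum>i\<in>I. ls i) :: nat)"
  using assms
proof (induction I rule: finite_induct)
  case (insert a I)
  have "fact (ls a) * (\<Prod>i\<in>I. fact (ls i)) dvd fact (ls a) * (fact (\<Sum>i\<in>I. ls i) :: nat)"
    using insert.IH by (rule mult_dvd_mono[OF dvd_refl])
  also have "\<dots> dvd fact (ls a + (\<Sum>i\<in>I. ls i))"
    by (rule fact_fact_dvd_fact)
  finally show ?case
    using insert.hyps by simp
qed simp

lemma fps_prod_nth_PiE:
  fixes f :: "'b \<Rightarrow> 'a::comm_semiring_1 fps"
  assumes I: "finite I"
  shows "(\<Prod>i\<in>I. f i) $ n = (\<Sum>ls\<in>{ls \<in> I \<rightarrow>\<^sub>E {..n}. sum ls I = n}. \<Prod>i\<in>I. f i $ ls i)"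
  unfolding fps_prod_nth'[OF I]
proof (rule sum.reindex_bij_witness[where i = "\<lambda>ls. \<Sum>i\<in>I. replicate_mset (ls i) i"
                                        and j = "\<lambda>X. restrict (count X) I"])
  fix ls assume ls: "ls \<in> {ls \<in> I \<rightarrow>\<^sub>E {..n}. sum ls I = n}"
  have count: "count (\<Sum>i\<in>I. replicate_mset (ls i) i) x = (if x \<in> I then ls x else 0)" for x
    using I by (simp add: count_sum)
  show "restrict (count (\<Sum>i\<in>I. replicate_mset (ls i) i)) I = ls"
    using ls by (auto simp: count PiE_iff extensional_def)
  show "(\<Sum>i\<in>I. replicate_mset (ls i) i) \<in> multisets_of_size I n"
    using ls by (auto simp: multisets_of_size_def count simp flip: count_greater_zero_iff split: if_splits)
next
  fix X assume X: "X \<in> multisets_of_size I n"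
  then have sub: "set_mset X \<subseteq> I" and size: "size X = n"
    by (auto simp: multisets_of_size_def)
  have "sum (count X) I = size X"
    unfolding size_multiset_overloaded_eq using I sub by (intro sum.mono_neutral_right) (auto simp: not_in_iff)
  then show "restrict (count X) I \<in> {ls \<in> I \<rightarrow>\<^sub>E {..n}. sum ls I = n}"
    using size I by (auto intro: member_le_sum)
  show "(\<Sum>i\<in>I. replicate_mset (restrict (count X) I i) i) = X"
    using I sub by (intro multiset_eqI) (auto simp: count_sum not_in_iff)
  show "(\<Prod>i\<in>I. f i $ restrict (count X) I i) = (\<Prod>x\<in>I. f x $ count X x)"
    by simp
qed

lemma fps_prod_nth_multinomial:
  fixes f :: "nat \<Rightarrow> 'a::{comm_semiring_1,semiring_char_0} fps"
  assumes I: "finite I"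
  shows "(\<Sum>ls\<in>{ls \<in> I \<rightarrow>\<^sub>E {..l}. sum ls I = l}.
            of_nat (multinomial l ls I) * (\<Prod>i\<in>I. fact (ls i) * f i $ ls i))
         = fact l * (\<Prod>i\<in>I. f i) $ l"
proof -
  have summand: "of_nat (multinomial l ls I) * (\<Prod>i\<in>I. fact (ls i) * f i $ ls i)
                = fact l * (\<Prod>i\<in>I. f i $ ls i)" if "sum ls I = l" for ls
  proof -
    have "multinomial l ls I * (\<Prod>i\<in>I. fact (ls i)) = fact l"
      using dvd_div_mult_self[OF fact_prod_dvd_fact_sum[OF I, of ls]] that
      by (simp only: multinomial_def)
    then have "of_nat (multinomial l ls I * (\<Prod>i\<in>I. fact (ls i))) = (of_nat (fact l) :: 'a)"
      by (rule arg_cong)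
    then have "of_nat (multinomial l ls I) * (\<Prod>i\<in>I. fact (ls i)) = (fact l :: 'a)"
      by (simp only: of_nat_mult of_nat_prod of_nat_fact)
    then show ?thesis
      by (simp only: prod.distrib mult.assoc[symmetric])
  qed
  show ?thesis
    unfolding fps_prod_nth_PiE[OF I] sum_distrib_left by (rule sum.cong) (simp_all add: summand)
qed

lemma fls_deriv_power_int:
  fixes f :: "'a::field fls"
  shows "fls_deriv (f powi d) = of_int d * f powi (d - 1) * fls_deriv f"
proof (cases d)
  case (nonneg m)
  show ?thesis
  proof (cases m)
    case (Suc k)
    have "f powi d = f ^ Suc k" "of_int d = (of_nat (Suc k) :: 'a fls)"
      by (simp_all add: nonneg Suc del: of_nat_Suc)
    moreover have "f powi (d - 1) = f ^ k"
      by (simp add: nonneg Suc)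
    ultimately show ?thesis
      using fls_deriv_power[of f "Suc k"] by simp
  qed (simp add: nonneg)
next
  case (neg k)
  have "d - 1 = - int (Suc (Suc k))"
    using neg by simp
  then have powi: "f powi d = inverse (f ^ Suc k)" "f powi (d - 1) = inverse (f ^ Suc (Suc k))"
    by (simp_all only: neg power_int_minus power_int_of_nat)
  have "fls_deriv (f powi d) = - inverse (f ^ Suc k) * fls_deriv (f ^ Suc k) * inverse (f ^ Suc k)"
    unfolding powi by (rule fls_inverse_deriv_divring)
  also have "fls_deriv (f ^ Suc k) = of_nat (Suc k) * f ^ k * fls_deriv f"
    by (simp only: fls_deriv_power diff_Suc_1)
  also have "- inverse (f ^ Suc k) * (of_nat (Suc k) * f ^ k * fls_deriv f) * inverse (f ^ Suc k) =
             - of_nat (Suc k) * inverse (f ^ Suc (Suc k)) * fls_deriv f"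
    by (cases "f = 0") (simp_all add: field_simps del: of_nat_Suc)
  also have "- of_nat (Suc k) = (of_int d :: 'a fls)"
    by (simp add: neg)
  finally show ?thesis
    by (simp only: powi(2))
qed

lemma fls_residue_power_int_times_deriv:
  fixes f :: "'a::field_char_0 fls"
  assumes "d \<noteq> -1"
  shows "fls_residue (f powi d * fls_deriv f) = 0"
proof -
  have "of_int (d + 1) * fls_residue (f powi d * fls_deriv f) = fls_residue (fls_deriv (f powi (d + 1)))"
    by (simp only: fls_deriv_power_int add_diff_cancel_right' mult.assoc fls_residue_of_int_times)
  also have "\<dots> = 0"
    by (rule fls_residue_deriv)
  moreover have "of_int (d + 1) \<noteq> (0 :: 'a)"
    using assms by (simp only: of_int_eq_0_iff)
  ultimately show ?thesis
    by simp
qed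

lemma fls_compose_fps_X_intpow:
  assumes "H \<noteq> 0" "H $ 0 = 0"
  shows "fls_compose_fps (fls_X_intpow d) H = fps_to_fls H powi d"
  using assms by (simp add: fls_compose_fps_powi flip: fls_X_power_int)

lemma fls_residue_compose_fps_X_intpow:
  fixes H :: "'a::field_char_0 fps"
  assumes H0: "H $ 0 = 0" and H1: "H $ 1 \<noteq> 0"
  shows "fls_residue (fls_compose_fps (fls_X_intpow d) H * fps_to_fls (fps_deriv H))
           = fls_residue (fls_X_intpow d :: 'a fls)"
proof -
  have "H \<noteq> 0" "subdegree H = 1"
    using H0 H1 by (auto intro: subdegreeI)
  then have "fls_compose_fps (fls_X_intpow d) H = fps_to_fls H powi d"
      and "fls_subdegree (fps_to_fls H) = 1"
    using H0 by (simp_all add: fls_compose_fps_X_intpow fls_subdegree_fls_to_fps)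
  then show ?thesis
    unfolding fls_residue_fls_X_intpow
    using fls_residue_power_int_times_deriv[of d "fps_to_fls H"]
          fls_residue_deriv_times_inverse_eq_subdegree(2)[of "fps_to_fls H"]
    by (cases "d = -1") (simp_all add: fls_deriv_fps_to_fls power_int_minus del: fls_residue_def)
qed

lemma fls_residue_compose_fps:
  fixes H :: "'a::field_char_0 fps"
  assumes H0: "H $ 0 = 0" and H1: "H $ 1 \<noteq> 0"
  shows "fls_residue (fls_compose_fps f H * fps_to_fls (fps_deriv H)) = fls_residue f"
proof (induction "nat (- fls_subdegree f)" arbitrary: f rule: less_induct)
  case less
  have H: "H \<noteq> 0" "H $ 0 = 0"
    using H0 H1 by auto
  show ?case
  proof (cases "fls_subdegree f \<ge> 0")
    case True
    then have "f = fps_to_fls (fls_regpart f)"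
      by simp
    then have "fls_compose_fps f H * fps_to_fls (fps_deriv H) = fps_to_fls ((fls_regpart f oo H) * fps_deriv H)"
      by (metis H fls_compose_fps_to_fls fls_times_fps_to_fls)
    then show ?thesis
      using True by simp
  next
    case False
    \<comment> \<open>Splitting off the leading monomial lowers the order of the pole.\<close>
    define d where "d = fls_subdegree f"
    define g where "g = f - fls_const (fls_nth f d) * fls_X_intpow d"
    have "nat (- fls_subdegree g) < nat (- fls_subdegree f)"
    proof (cases "g = 0")
      case False
      have "d < fls_subdegree g"
        by (rule fls_subdegree_greaterI[OF False]) (auto simp: g_def d_def)
      then show ?thesis
        using \<open>\<not> fls_subdegree f \<ge> 0\<close> by (simp add: d_def)
    qed (use False in simp)
    then have IH: "fls_residue (fls_compose_fps g H * fps_to_fls (fps_deriv H)) = fls_residue g"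
      by (rule less.hyps)
    have split: "f = fls_const (fls_nth f d) * fls_X_intpow d + g"
      by (simp add: g_def)
    have "fls_residue (fls_compose_fps f H * fps_to_fls (fps_deriv H))
        = fls_nth f d * fls_residue (fls_compose_fps (fls_X_intpow d) H * fps_to_fls (fps_deriv H))
          + fls_residue (fls_compose_fps g H * fps_to_fls (fps_deriv H))"
      by (subst split) (simp add: H fls_compose_fps_add fls_compose_fps_mult distrib_right
                                  mult.assoc fls_residue_add fls_residue_fls_const_times del: fls_residue_def)
    also have "\<dots> = fls_residue f"
      unfolding IH fls_residue_compose_fps_X_intpow[OF H0 H1] by (simp add: g_def)
    finally show ?thesis .
  qed
qed

lemma fps_binomial_compose_exp_minus_1:
  fixes c :: "'a::field_char_0"
  shows "fps_binomial c oo (fps_exp 1 - 1) = fps_exp c"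
proof -
  define G where "G = fps_binomial c oo (fps_exp 1 - 1)"
  have exp1: "(1 + fps_X) oo (fps_exp 1 - 1) = (fps_exp 1 :: 'a fps)"
    by (simp add: fps_compose_add_distrib)
  have "fps_deriv G = (fps_deriv (fps_binomial c) oo (fps_exp 1 - 1)) * fps_exp 1"
    unfolding G_def by (simp add: fps_compose_deriv)
  also have "fps_deriv (fps_binomial c) oo (fps_exp 1 - 1) = fps_const c * G / fps_exp 1"
    unfolding fps_binomial_deriv G_def
    by (subst fps_compose_divide_distrib) (simp_all add: exp1 fps_compose_mult_distrib unit_imp_dvd)
  finally have "fps_deriv G = fps_const c * G"
    by (simp add: unit_imp_dvd)
  then have "G = fps_const (G $ 0) * fps_exp c"
    by (simp only: fps_exp_unique_ODE)
  then show ?thesis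
    by (simp add: G_def)
qed

lemma fps_ln_compose_exp_minus_1: "fps_ln 1 oo (fps_exp 1 - 1) = (fps_X :: 'a::field_char_0 fps)"
  using fps_inv_fps_exp_compose(1)[of "1::'a"] by (simp add: fps_ln_fps_exp_inv)

definition bernoulli2_gf :: "'a::field_char_0 \<Rightarrow> 'a fps" where
  "bernoulli2_gf c = fps_X * fps_binomial c / fps_ln 1"

lemma fps_X_times_exp_minus_1_div_X:
  "fps_X * ((fps_exp 1 - 1) / fps_X) = (fps_exp 1 - 1 :: 'a::field_char_0 fps)"
proof (rule dvd_mult_div_cancel)
  have "subdegree (fps_exp 1 - 1 :: 'a fps) = 1"
    by (rule subdegreeI) auto
  then show "fps_X dvd (fps_exp 1 - 1 :: 'a fps)"
    by (metis dvd_triv_right fps_shift_times_fps_X order_refl)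
qed

lemma bernoulli2_gf_compose_exp_minus_1:
  fixes c :: "'a::field_char_0"
  shows "bernoulli2_gf c oo (fps_exp 1 - 1) = (fps_exp 1 - 1) / fps_X * fps_exp c"
proof -
  have "subdegree (fps_ln (1::'a)) = 1"
    by (rule subdegreeI) (auto simp: fps_ln_nth)
  moreover have "subdegree (fps_X * fps_binomial c) = 1" "fps_binomial c \<noteq> 0"
    by (auto intro!: subdegreeI exI[of _ 0] simp: fps_binomial_nth fps_eq_iff)
  ultimately have "fps_ln 1 dvd fps_X * fps_binomial c"
    by (subst fps_dvd_iff) auto
  then have "(bernoulli2_gf c oo (fps_exp 1 - 1)) * (fps_ln 1 oo (fps_exp 1 - 1))
             = (fps_X * fps_binomial c) oo (fps_exp 1 - 1)"
    unfolding bernoulli2_gf_def by (rule fps_compose_divide[symmetric]) simp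
  also have "\<dots> = (fps_exp 1 - 1) * fps_exp c"
    by (simp add: fps_compose_mult_distrib fps_binomial_compose_exp_minus_1)
  also have "\<dots> = (fps_exp 1 - 1) / fps_X * fps_exp c * fps_X"
    by (subst (1) fps_X_times_exp_minus_1_div_X[symmetric]) (simp only: mult_ac)
  finally show ?thesis
    by (simp add: fps_ln_compose_exp_minus_1)
qed

lemma mult_power_int_times_power_cancel:
  fixes x y z :: "'a::field"
  assumes "y \<noteq> 0"
  shows "(x * y) powi (- int m) * (y * z) ^ (m + k) = x powi (- int m) * (y ^ k * z ^ (m + k))"
  unfolding power_int_minus power_int_of_nat
  using assms by (cases "x = 0"; cases m) (simp_all add: power_mult_distrib power_add field_simps)

lemma bernoulli2_gf_power_nth:
  fixes c :: "'a::field_char_0"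
  assumes "l < n"
  shows "bernoulli2_gf c ^ n $ l
           = (((fps_exp 1 - 1) / fps_X) ^ (n - l - 1) * fps_exp (of_nat n * c + 1)) $ l"
proof -
  define E :: "'a fps" where "E = fps_exp 1 - 1"
  define D where "D = E / fps_X"
  define k where "k = n - l - 1"
  have E: "E \<noteq> 0" "E $ 0 = 0" "E $ 1 \<noteq> 0"
    by (auto simp: E_def fps_eq_iff exI[of _ 1])
  have D: "fps_to_fls D \<noteq> 0"
    using E(1) fps_X_times_exp_minus_1_div_X[where 'a='a] by (auto simp: D_def E_def)
  have "bernoulli2_gf c ^ n $ l = fls_residue (fls_X_intpow (- int l - 1) * fps_to_fls (bernoulli2_gf c ^ n))"
    using fls_residue_shift_nth[of "fps_to_fls (bernoulli2_gf c ^ n)" "int l"] by simp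
  also have "\<dots> = fls_residue (fls_compose_fps (fls_X_intpow (- int l - 1) * fps_to_fls (bernoulli2_gf c ^ n)) E
                                * fps_to_fls (fps_deriv E))"
    by (rule fls_residue_compose_fps[OF E(2,3), symmetric])
  also have "fls_compose_fps (fls_X_intpow (- int l - 1) * fps_to_fls (bernoulli2_gf c ^ n)) E
               * fps_to_fls (fps_deriv E)
           = (fls_X * fps_to_fls D) powi (- int l - 1) * (fps_to_fls D * fps_to_fls (fps_exp c)) ^ n
               * fps_to_fls (fps_exp 1)"
  proof -
    have "fps_to_fls E = fps_to_fls (fps_X * D)"
      unfolding D_def E_def fps_X_times_exp_minus_1_div_X ..
    then have "fps_to_fls E = fls_X * fps_to_fls D"
      by (simp only: fls_times_fps_to_fls fps_X_to_fls)
    moreover have "bernoulli2_gf c ^ n oo E = (D * fps_exp c) ^ n"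
      by (simp add: fps_compose_power[symmetric] E D_def E_def bernoulli2_gf_compose_exp_minus_1)
    then have "fls_compose_fps (fps_to_fls (bernoulli2_gf c ^ n)) E
                 = (fps_to_fls D * fps_to_fls (fps_exp c)) ^ n"
      by (subst fls_compose_fps_to_fls[OF E(1,2)]) (simp only: fls_times_fps_to_fls fps_to_fls_power)
    moreover have "fps_deriv E = fps_exp 1"
      by (simp add: E_def)
    ultimately show ?thesis
      by (simp only: fls_compose_fps_mult[OF E(1,2)] fls_compose_fps_X_intpow[OF E(1,2)])
  qed
  also have "\<dots> = fls_X_intpow (- int l - 1) * fps_to_fls (D ^ k * fps_exp (of_nat n * c + 1))"
  proof -
    have "n = Suc l + k" "- int l - 1 = - int (Suc l)"
      using assms by (simp_all add: k_def)
    moreover have "fps_exp (of_nat n * c + 1) = fps_exp c ^ n * fps_exp 1"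
      by (simp add: fps_exp_add_mult fps_exp_power_mult)
    ultimately show ?thesis
      using mult_power_int_times_power_cancel[OF D, of fls_X "Suc l" "fps_to_fls (fps_exp c)" k]
      by (simp only: fls_X_power_int fls_times_fps_to_fls fps_to_fls_power mult.assoc)
  qed
  also have "fls_residue \<dots> = (D ^ k * fps_exp (of_nat n * c + 1)) $ l"
    using fls_residue_shift_nth[of "fps_to_fls (D ^ k * fps_exp (of_nat n * c + 1))" "int l"] by simp
  finally show ?thesis
    by (simp add: D_def E_def k_def)
qed

lemma bernoulli2_eq_fact_times_nth: "bernoulli2 l c = fact l * bernoulli2_gf c $ l"
  by (simp add: bernoulli2_def bernoulli2_gf_def)

theorem theorem7:
  fixes n l :: nat and c :: complex
  assumes "n \<ge> 1" and "l \<le> n - 1" and "c \<noteq> 0"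
  shows "(\<Sum>ls \<in> {ls \<in> {1..n} \<rightarrow>\<^sub>E {..l}. (\<Sum>i\<in>{1..n}. ls i) = l}.
            of_nat (multinomial l ls {1..n}) * (\<Prod>i\<in>{1..n}. bernoulli2 (ls i) c))
       = bernoulli_ord (int l - int n + 1) l (c * of_nat n + 1)"
proof -
  have "l < n"
    using assms(1,2) by linarith
  then have gf: "bernoulli_ord_gf (int l - int n + 1) = ((fps_exp 1 - 1) / fps_X) ^ (n - l - 1)"
    by (auto simp: bernoulli_ord_gf_def nat_diff_distrib)
  have "(\<Sum>ls \<in> {ls \<in> {1..n} \<rightarrow>\<^sub>E {..l}. (\<Sum>i\<in>{1..n}. ls i) = l}.
            of_nat (multinomial l ls {1..n}) * (\<Prod>i\<in>{1..n}. bernoulli2 (ls i) c))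
        = fact l * bernoulli2_gf c ^ n $ l"
    using fps_prod_nth_multinomial[of "{1..n}" l "\<lambda>_. bernoulli2_gf c"]
    by (simp add: bernoulli2_eq_fact_times_nth)
  also have "\<dots> = bernoulli_ord (int l - int n + 1) l (c * of_nat n + 1)"
    using bernoulli2_gf_power_nth[OF \<open>l < n\<close>, of c]
    by (simp add: bernoulli_ord_def gf mult.commute)
  finally show ?thesis .
qed

end
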